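(* A slice function $f\in\mathcal{S}(\Omega)$ admits a multiplicative inverse $f^{-\bullet}$ in the algebra $\mathcal{S}(\Omega)$ (with respect to the slice product) if, and only if, $f^c$ does. If this is the case, then $(f^c)^{-\bullet}=(f^{-\bullet})^c$. Furthermore, $f$ admits a multiplicative inverse $f^{-\bullet}$ if, and only if, both $N(f)$ and $N(f^c)$ do. If this is the case, then \[f^{-\bullet}=f^c\cdot N(f)^{-\bullet}=N(f^c)^{-\bullet}\cdot f^c.\] Moreover, $N(f)^{-\bullet}=(f^{-\bullet})^c\cdot f^{-\bullet}=N((f^{-\bullet})^c)$.
   Context: Let $A$ be a finite-dimensional real algebra with unit $1$ ($\mathbb{R}$ identified with $\mathbb{R}1$) which is alternative (the associator $(x,y,z)=(xy)z-x(yz)$ is alternating), with a $^*$-involution $x\mapsto x^c$ (real linear, $(x^c)^c=x$, $(xy)^c=y^cx^c$, $r^c=r$ for $r\in\mathbb{R}$). Let $t(x)=x+x^c$, $n(x)=xx^c$, $\mathbb{S}_A=\{J\in A:t(J)=0,n(J)=1\}$ (assumed non-empty), $Q_A=\mathbb{R}\cup\{x\in A:t(x),n(x)\in\mathbb{R},\ 4n(x)>t(x)^2\}$; every $x\in Q_A$ is $\alpha+\beta J$ with $\alpha,\beta\in\mathbb{R}$, $J\in\mathbb{S}_A$. Let $D\subseteq\mathbb{C}$ be non-empty and invariant under complex conjugation and $\Omega=\{\alpha+\beta J:\alpha+i\beta\in D,\ J\in\mathbb{S}_A\}$. Let $A_{\mathbb{C}}=\{a+\imath b:a,b\in A\}$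 with product $(a+\imath b)(a'+\imath b')=aa'-bb'+\imath(ab'+ba')$, conjugation $\overline{a+\imath b}=a-\imath b$ and involution $(a+\imath b)^c=a^c+\imath b^c$. A stem function is $F=F_1+\imath F_2:D\to A_{\mathbb{C}}$ with $F(\bar z)=\overline{F(z)}$; it induces the slice function $f=\mathcal{I}(F):\Omega\to A$, $f(\alpha+\beta J)=F_1(\alpha+i\beta)+JF_2(\alpha+i\beta)$ (each slice function is induced by a unique stem function). $\mathcal{S}(\Omega)$ is the set of slice functions on $\Omega$, with pointwise sum, slice product $f\cdot g=\mathcal{I}(FG)$ (pointwise product of the stem functions in $A_{\mathbb{C}}$), conjugate $f^c=\mathcal{I}(F^c)$ where $F^c(z)=F(z)^c$, and normal function $N(f)=f\cdot f^c$; with these operations $\mathcal{S}(\Omega)$ is a real alternative $^*$-algebra with unit the constant $1$. $h^{-\bullet}$ denotes the two-sided multiplicative inverse of $h$ in $\mathcal{S}(\Omega)$. *)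

theory Defs
  imports Complex_Main
begin

text \<open>The product is NOT assumed associative; alternativity is expressed by the left and
  right alternative laws (equivalent to the associator being alternating).\<close>

class alt_star_algebra = real_vector + one + times +
  fixes invol :: "'a \<Rightarrow> 'a"
  assumes distrib_right: "(a + b) * c = a * c + b * c"
    and distrib_left: "a * (b + c) = a * b + a * c"
    and scaleR_mult_left: "(r *\<^sub>R a) * b = r *\<^sub>R (a * b)"
    and scaleR_mult_right: "a * (r *\<^sub>R b) = r *\<^sub>R (a * b)"
    and one_mult: "1 * a = a"
    and mult_one: "a * 1 = a"
    and one_neq_zero: "(1::'a) \<noteq> 0"
    and left_alternative: "(a * a) * b = a * (a * b)"
    and right_alternative: "(b * a) * a = b * (a * a)"
    and invol_add: "invol (a + b) = invol a + invol b"
    and invol_scaleR: "invol (r *\<^sub>R a) = r *\<^sub>R invol a"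
    and invol_invol: "invol (invol a) = a"
    and invol_mult: "invol (a * b) = invol b * invol a"
    and invol_one: "invol 1 = 1"
    and finite_dim: "\<exists>B. finite B \<and> (\<forall>x. \<exists>c. x = (\<Sum>b\<in>B. c b *\<^sub>R b))"

definition trace_A :: "'a::alt_star_algebra \<Rightarrow> 'a" where
  "trace_A x = x + invol x"
definition norm_A :: "'a::alt_star_algebra \<Rightarrow> 'a" where
  "norm_A x = x * invol x"
definition sphere_A :: "'a::alt_star_algebra set" where
  "sphere_A = {J. trace_A J = 0 \<and> norm_A J = 1}"

definition circ :: "complex set \<Rightarrow> 'a::alt_star_algebra set" where
  "circ D = {Re z *\<^sub>R 1 + Im z *\<^sub>R J | z J. z \<in> D \<and> J \<in> sphere_A}"

text \<open>A_C is represented by pairs (a,b) standing for a + i b.\<close>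
definition cmult :: "('a::alt_star_algebra \<times> 'a) \<Rightarrow> ('a \<times> 'a) \<Rightarrow> ('a \<times> 'a)" where
  "cmult p q = (fst p * fst q - snd p * snd q, fst p * snd q + snd p * fst q)"
definition cconj :: "('a::alt_star_algebra \<times> 'a) \<Rightarrow> ('a \<times> 'a)" where
  "cconj p = (fst p, - snd p)"
definition cinvol :: "('a::alt_star_algebra \<times> 'a) \<Rightarrow> ('a \<times> 'a)" where
  "cinvol p = (invol (fst p), invol (snd p))"

text \<open>Stem functions on D (extended by 0 outside D, so they are determined by their values on D).\<close>
definition is_stem :: "complex set \<Rightarrow> (complex \<Rightarrow> 'a::alt_star_algebra \<times> 'a) \<Rightarrow> bool" where
  "is_stem D F \<longleftrightarrow> (\<forall>z\<in>D. F (cnj z) = cconj (F z)) \<and> (\<forall>z. z \<notin> D \<longrightarrow> F z = (0, 0))"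

text \<open>f is induced by F: f(\<alpha>+\<beta>J) = F1(\<alpha>+i\<beta>) + J F2(\<alpha>+i\<beta>) on \<Omega>_D,
  and f is 0 outside \<Omega>_D (functions on \<Omega>_D are represented extensionally).\<close>
definition induces :: "complex set \<Rightarrow> (complex \<Rightarrow> 'a::alt_star_algebra \<times> 'a) \<Rightarrow> ('a \<Rightarrow> 'a) \<Rightarrow> bool" where
  "induces D F f \<longleftrightarrow>
     (\<forall>z J. z \<in> D \<longrightarrow> J \<in> sphere_A \<longrightarrow>
        f (Re z *\<^sub>R 1 + Im z *\<^sub>R J) = fst (F z) + J * snd (F z))
     \<and> (\<forall>x. x \<notin> circ D \<longrightarrow> f x = 0)"

definition slice_fun :: "complex set \<Rightarrow> ('a::alt_star_algebra \<Rightarrow> 'a) \<Rightarrow> bool" where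
  "slice_fun D f \<longleftrightarrow> (\<exists>F. is_stem D F \<and> induces D F f)"

definition stem_of :: "complex set \<Rightarrow> ('a::alt_star_algebra \<Rightarrow> 'a) \<Rightarrow> complex \<Rightarrow> 'a \<times> 'a" where
  "stem_of D f = (THE F. is_stem D F \<and> induces D F f)"

definition induced :: "complex set \<Rightarrow> (complex \<Rightarrow> 'a::alt_star_algebra \<times> 'a) \<Rightarrow> 'a \<Rightarrow> 'a" where
  "induced D F = (THE f. induces D F f)"

definition slice_mult :: "complex set \<Rightarrow> ('a::alt_star_algebra \<Rightarrow> 'a) \<Rightarrow> ('a \<Rightarrow> 'a) \<Rightarrow> 'a \<Rightarrow> 'a" where
  "slice_mult D f g = induced D (\<lambda>z. cmult (stem_of D f z) (stem_of D g z))"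

definition slice_cnj :: "complex set \<Rightarrow> ('a::alt_star_algebra \<Rightarrow> 'a) \<Rightarrow> 'a \<Rightarrow> 'a" where
  "slice_cnj D f = induced D (\<lambda>z. cinvol (stem_of D f z))"

definition slice_N :: "complex set \<Rightarrow> ('a::alt_star_algebra \<Rightarrow> 'a) \<Rightarrow> 'a \<Rightarrow> 'a" where
  "slice_N D f = slice_mult D f (slice_cnj D f)"

definition slice_one :: "complex set \<Rightarrow> 'a::alt_star_algebra \<Rightarrow> 'a" where
  "slice_one D = (\<lambda>x. if x \<in> circ D then 1 else 0)"

definition slice_invertible :: "complex set \<Rightarrow> ('a::alt_star_algebra \<Rightarrow> 'a) \<Rightarrow> bool" where
  "slice_invertible D f \<longleftrightarrow>
     (\<exists>g. slice_fun D g \<and> slice_mult D f g = slice_one D \<and> slice_mult D g f = slice_one D)"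

definition slice_inv :: "complex set \<Rightarrow> ('a::alt_star_algebra \<Rightarrow> 'a) \<Rightarrow> 'a \<Rightarrow> 'a" where
  "slice_inv D f = (THE g. slice_fun D g \<and> slice_mult D f g = slice_one D \<and> slice_mult D g f = slice_one D)"

end

theory Submission
  imports Defs "HOL-Library.Product_Plus"
begin

text \<open>Slice product and conjugation act on stems pointwise, by the product and the involution
  of the complexification \<open>A\<^sub>C\<close>, and a slice function is invertible exactly when its stem
  is invertible at every point of \<open>D\<close>. Everything therefore reduces to facts about inverses
  in the alternative \<open>*\<close>-algebra \<open>A\<^sub>C\<close>: \<open>u\<close> is invertible iff \<open>u\<^sup>c\<close> is, iff both
  \<open>u u\<^sup>c\<close> and \<open>u\<^sup>c u\<close> are, and then \<open>u\<^sup>-\<^sup>1 = u\<^sup>c (u u\<^sup>c)\<^sup>-\<^sup>1 = (u\<^sup>c u)\<^sup>-\<^sup>1 u\<^sup>c\<close>.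
  Without associativity these follow from the identity \<open>(x,y,yz) = (x,y,z)y\<close>, a sum of two
  instances of Teichmueller's identity, which forces the associator to vanish whenever two of
  its arguments are mutually inverse.\<close>

locale alternative_ring =
  fixes mult :: "'b::ab_group_add \<Rightarrow> 'b \<Rightarrow> 'b" (infixl "\<odot>" 70) and e :: 'b
  assumes distrib_left: "a \<odot> (b + c) = a \<odot> b + a \<odot> c"
    and distrib_right: "(a + b) \<odot> c = a \<odot> c + b \<odot> c"
    and unit_left: "e \<odot> a = a"
    and unit_right: "a \<odot> e = a"
    and left_alternative: "(a \<odot> a) \<odot> b = a \<odot> (a \<odot> b)"
    and right_alternative: "(b \<odot> a) \<odot> a = b \<odot> (a \<odot> a)"
    and no_2_torsion: "a + a = 0 \<Longrightarrow> a = 0"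
begin

lemma mult_zero_right [simp]: "a \<odot> 0 = 0"
  using distrib_left[of a 0 0] by simp

lemma mult_zero_left [simp]: "0 \<odot> a = 0"
  using distrib_right[of 0 0 a] by simp

lemma mult_minus_left: "(- a) \<odot> b = - (a \<odot> b)"
  using distrib_right[of a "- a" b] by (simp add: eq_neg_iff_add_eq_0 add.commute)

lemma mult_minus_right: "a \<odot> (- b) = - (a \<odot> b)"
  using distrib_left[of a b "- b"] by (simp add: eq_neg_iff_add_eq_0 add.commute)

lemma left_diff_distrib: "(a - b) \<odot> c = a \<odot> c - b \<odot> c"
  using distrib_right[of a "- b" c] by (simp add: mult_minus_left)

lemma right_diff_distrib: "a \<odot> (b - c) = a \<odot> b - a \<odot> c"
  using distrib_left[of a b "- c"] by (simp add: mult_minus_right)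

lemmas ring_distribs =
  distrib_left distrib_right mult_minus_left mult_minus_right left_diff_distrib right_diff_distrib

definition assoc :: "'b \<Rightarrow> 'b \<Rightarrow> 'b \<Rightarrow> 'b" where
  "assoc a b c = (a \<odot> b) \<odot> c - a \<odot> (b \<odot> c)"

lemma assoc_swap12: "assoc b a c = - assoc a b c"
proof -
  have "assoc a b c + assoc b a c = 0"
    using left_alternative[of "a + b" c] left_alternative[of a c] left_alternative[of b c]
    by (simp add: assoc_def ring_distribs algebra_simps)
  then show ?thesis
    by (simp add: eq_neg_iff_add_eq_0 add.commute)
qed

lemma assoc_swap23: "assoc c b a = - assoc c a b"
proof -
  have "assoc c a b + assoc c b a = 0"
    using right_alternative[of c "a + b"] right_alternative[of c a] right_alternative[of c b]
    by (simp add: assoc_def ring_distribs algebra_simps)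
  then show ?thesis
    by (simp add: eq_neg_iff_add_eq_0 add.commute)
qed

lemma left_alternative_linear: "(b \<odot> a) \<odot> d = a \<odot> (b \<odot> d) + b \<odot> (a \<odot> d) - (a \<odot> b) \<odot> d"
  using assoc_swap12[of a b d] by (simp add: assoc_def algebra_simps)

lemma right_alternative_linear: "(d \<odot> b) \<odot> a = d \<odot> (a \<odot> b) + d \<odot> (b \<odot> a) - (d \<odot> a) \<odot> b"
  using assoc_swap23[of d a b] by (simp add: assoc_def algebra_simps)

lemma assoc_cycle: "assoc a b c = assoc b c a"
  using assoc_swap12[of b a c] assoc_swap23[of b a c] by simp

lemma assoc_same12 [simp]: "assoc a a c = 0"
  by (simp add: assoc_def left_alternative)

lemma assoc_same23 [simp]: "assoc c a a = 0"
  by (simp add: assoc_def right_alternative)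

lemma assoc_add3: "assoc a b (c + d) = assoc a b c + assoc a b d"
  by (simp add: assoc_def ring_distribs)

lemma teichmueller_identity:
  "assoc (w \<odot> x) y z - assoc w (x \<odot> y) z + assoc w x (y \<odot> z) = w \<odot> assoc x y z + assoc w x y \<odot> z"
  by (simp add: assoc_def ring_distribs algebra_simps)

lemma assoc_mult_by_second: "assoc x y (y \<odot> z) = assoc x y z \<odot> y"
proof -
  have "assoc (x \<odot> y) y z - assoc x (y \<odot> y) z + assoc x y (y \<odot> z) = 0"
    using teichmueller_identity[of x y y z] by simp
  moreover have "- assoc (x \<odot> y) y z + assoc x (y \<odot> y) z = assoc x y z \<odot> y"
    using teichmueller_identity[of z x y y] assoc_cycle[of z "x \<odot> y" y]
      assoc_cycle[of z x "y \<odot> y"] assoc_cycle[of z x y]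
    by simp
  ultimately show ?thesis
    by (simp add: algebra_simps)
qed

lemma assoc_mult_by_first: "assoc x y (x \<odot> z) = assoc x y z \<odot> x"
  using assoc_mult_by_second[of y x z] by (simp add: assoc_swap12[of y x] mult_minus_left)

lemma assoc_mult_by_product: "assoc x y ((x \<odot> y) \<odot> z) = assoc x y z \<odot> (y \<odot> x)"
proof -
  define a where "a = assoc x y z"
  have "(x \<odot> y) \<odot> z = x \<odot> (y \<odot> z) + a"
    by (simp add: a_def assoc_def)
  then have "assoc x y ((x \<odot> y) \<odot> z) = assoc x y (x \<odot> (y \<odot> z)) + assoc x y a"
    by (simp add: assoc_add3)
  also have "\<dots> = (a \<odot> y) \<odot> x + assoc x y a"
    by (simp add: assoc_mult_by_first assoc_mult_by_second a_def)
  also have "\<dots> = a \<odot> (y \<odot> x)"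
  proof -
    have "assoc x y a = - assoc a y x"
      using assoc_swap23[of a y x] assoc_cycle[of a x y] by simp
    then show ?thesis
      by (simp add: assoc_def[of a y x])
  qed
  finally show ?thesis
    by (simp add: a_def)
qed

definition inverse_pair :: "'b \<Rightarrow> 'b \<Rightarrow> bool" where
  "inverse_pair u v \<longleftrightarrow> u \<odot> v = e \<and> v \<odot> u = e"

definition invertible :: "'b \<Rightarrow> bool" where
  "invertible u \<longleftrightarrow> (\<exists>v. inverse_pair u v)"

definition inverse_of :: "'b \<Rightarrow> 'b" where
  "inverse_of u = (THE v. inverse_pair u v)"

lemma inverse_pair_sym: "inverse_pair u v \<Longrightarrow> inverse_pair v u"
  by (auto simp: inverse_pair_def)

text \<open>The associator \<open>a\<close> below satisfies \<open>a \<odot> u = a \<odot> v = 0\<close>, whence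
  \<open>assoc a u v = - a\<close> and, by skew-symmetry, also \<open>assoc a u v = a\<close>.\<close>

lemma assoc_inverse_pair:
  assumes "inverse_pair u v"
  shows "assoc w u v = 0"
proof -
  define a where "a = assoc w u v"
  have uv: "u \<odot> v = e" and vu: "v \<odot> u = e"
    using assms by (auto simp: inverse_pair_def)
  have au: "a \<odot> u = 0"
    using assoc_mult_by_second[of w u v] by (simp add: uv a_def assoc_def unit_right)
  have "assoc w v u \<odot> v = 0"
    using assoc_mult_by_second[of w v u] by (simp add: vu assoc_def unit_right)
  then have av: "a \<odot> v = 0"
    using assoc_swap23[of w v u] by (simp add: a_def mult_minus_left)
  have "assoc a v u = - a"
    by (simp add: assoc_def av vu unit_right)
  then have "a = assoc a u v"
    using assoc_swap23[of a u v] by simp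
  also have "assoc a u v = - a"
    by (simp add: assoc_def au uv unit_right)
  finally have "a + a = 0"
    by (simp only: eq_neg_iff_add_eq_0)
  then show ?thesis
    using no_2_torsion a_def by metis
qed

lemma inverse_pair_cancel_left:
  assumes "inverse_pair u v"
  shows "v \<odot> (u \<odot> z) = z"
proof -
  have "assoc v u z = 0"
    using assoc_inverse_pair[OF inverse_pair_sym[OF assms], of z] assoc_cycle[of v u z]
      assoc_cycle[of u z v]
    by simp
  then show ?thesis
    using assms by (simp add: assoc_def inverse_pair_def unit_left)
qed

lemma inverse_pair_cancel_right:
  assumes "inverse_pair u v"
  shows "(z \<odot> u) \<odot> v = z"
  using assoc_inverse_pair[OF assms, of z] assms
  by (simp add: assoc_def inverse_pair_def unit_right)

lemma inverse_pair_unique: "inverse_pair u v \<Longrightarrow> inverse_pair u v' \<Longrightarrow> v = v'"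
  using inverse_pair_cancel_left[of u v v'] by (simp add: inverse_pair_def unit_right)

lemma inverse_of_eq: "inverse_pair u v \<Longrightarrow> inverse_of u = v"
  unfolding inverse_of_def by (rule the_equality) (auto intro: inverse_pair_unique)

lemma inverse_pair_inverse_of: "invertible u \<Longrightarrow> inverse_pair u (inverse_of u)"
  using inverse_of_eq by (auto simp: invertible_def)

lemma mult_inverse_pair_eq_unit:
  assumes x: "inverse_pair x x'" and y: "inverse_pair y y'"
  shows "(x \<odot> y) \<odot> (y' \<odot> x') = e"
proof -
  have y_mult: "y \<odot> (y' \<odot> x') = x'"
    using inverse_pair_cancel_left[OF inverse_pair_sym[OF y]] .
  have "assoc x y x' = 0"
    using assoc_inverse_pair[OF x, of y] assoc_cycle[of x y x'] assoc_swap23[of y x x'] by simp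
  then have "assoc x y (y' \<odot> x') \<odot> y = 0"
    using assoc_mult_by_second[of x y "y' \<odot> x'"] y_mult by simp
  then have "assoc x y (y' \<odot> x') = 0"
    using inverse_pair_cancel_right[OF y, of "assoc x y (y' \<odot> x')"] by simp
  then show ?thesis
    using y_mult x by (simp add: assoc_def inverse_pair_def)
qed

lemma inverse_pair_mult:
  assumes "inverse_pair x x'" and "inverse_pair y y'"
  shows "inverse_pair (x \<odot> y) (y' \<odot> x')"
  using mult_inverse_pair_eq_unit[OF assms]
    mult_inverse_pair_eq_unit[OF assms(2)[THEN inverse_pair_sym] assms(1)[THEN inverse_pair_sym]]
  by (simp add: inverse_pair_def)

lemma inverse_pair_of_products:
  assumes p: "inverse_pair (x \<odot> y) h" and q: "inverse_pair (y \<odot> x) k"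
  shows "inverse_pair x (y \<odot> h)" and "y \<odot> h = k \<odot> y"
proof -
  have ph: "(x \<odot> y) \<odot> h = e" and qk: "(y \<odot> x) \<odot> k = e" and kq: "k \<odot> (y \<odot> x) = e"
    using p q by (auto simp: inverse_pair_def)
  have "assoc x y h \<odot> (y \<odot> x) = 0"
    using assoc_mult_by_product[of x y h] ph by (simp add: assoc_def unit_right)
  then have "assoc x y h = 0"
    using inverse_pair_cancel_right[OF q, of "assoc x y h"] by simp
  then have right: "x \<odot> (y \<odot> h) = e"
    using ph by (simp add: assoc_def)
  have "assoc y x k \<odot> (x \<odot> y) = 0"
    using assoc_mult_by_product[of y x k] qk by (simp add: assoc_def unit_right)
  then have "assoc k y x = 0"
    using inverse_pair_cancel_right[OF p, of "assoc y x k"] assoc_cycle[of k y x] by simp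
  then have left: "(k \<odot> y) \<odot> x = e"
    using kq by (simp add: assoc_def)
  have "assoc (k \<odot> y) x (x \<odot> (y \<odot> h)) = assoc (k \<odot> y) x (y \<odot> h) \<odot> x"
    by (rule assoc_mult_by_second)
  then have "(y \<odot> h - k \<odot> y) \<odot> x = 0"
    by (simp add: right left assoc_def unit_left unit_right)
  then have "(y \<odot> h) \<odot> x = e"
    using left by (simp add: left_diff_distrib)
  then show inv: "inverse_pair x (y \<odot> h)"
    using right by (simp add: inverse_pair_def)
  have "assoc (k \<odot> y) x (y \<odot> h) = 0"
    using assoc_inverse_pair[OF inv] by simp
  then show "y \<odot> h = k \<odot> y"
    using left right by (simp add: assoc_def unit_left unit_right)
qed

end

locale alternative_star_ring = alternative_ring +
  fixes star
  assumes star_mult: "star (a \<odot> b) = star b \<odot> star a"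
    and star_star [simp]: "star (star a) = a"
    and star_unit [simp]: "star e = e"
begin

lemma inverse_pair_star: "inverse_pair u v \<Longrightarrow> inverse_pair (star u) (star v)"
  by (auto simp: inverse_pair_def star_mult[symmetric])

lemma invertible_star_iff: "invertible (star u) \<longleftrightarrow> invertible u"
  using inverse_pair_star[of u] inverse_pair_star[of "star u"] by (auto simp: invertible_def)

lemma inverse_of_star: "invertible u \<Longrightarrow> inverse_of (star u) = star (inverse_of u)"
  by (intro inverse_of_eq inverse_pair_star inverse_pair_inverse_of)

lemma invertible_iff_norms:
  "invertible u \<longleftrightarrow> invertible (u \<odot> star u) \<and> invertible (star u \<odot> u)"
proof
  assume "invertible u"
  then have u: "inverse_pair u (inverse_of u)" and su: "inverse_pair (star u) (star (inverse_of u))"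
    by (simp_all add: inverse_pair_inverse_of inverse_pair_star)
  show "invertible (u \<odot> star u) \<and> invertible (star u \<odot> u)"
    using inverse_pair_mult[OF u su] inverse_pair_mult[OF su u] by (auto simp: invertible_def)
next
  assume "invertible (u \<odot> star u) \<and> invertible (star u \<odot> u)"
  then obtain h k where "inverse_pair (u \<odot> star u) h" and "inverse_pair (star u \<odot> u) k"
    by (auto simp: invertible_def)
  then show "invertible u"
    unfolding invertible_def by (blast intro: inverse_pair_of_products(1))
qed

lemma inverse_of_via_norms:
  assumes "invertible u"
  shows "inverse_of u = star u \<odot> inverse_of (u \<odot> star u)"
    and "inverse_of u = inverse_of (star u \<odot> u) \<odot> star u"
proof -
  have "invertible (u \<odot> star u)" "invertible (star u \<odot> u)"
    using assms unfolding invertible_iff_norms[of u] by simp_all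
  note products = inverse_pair_of_products[OF this[THEN inverse_pair_inverse_of]]
  show "inverse_of u = star u \<odot> inverse_of (u \<odot> star u)"
    using inverse_of_eq[OF products(1)] .
  then show "inverse_of u = inverse_of (star u \<odot> u) \<odot> star u"
    using products(2) by simp
qed

lemma inverse_of_norm:
  assumes "invertible u"
  shows "inverse_of (u \<odot> star u) = star (inverse_of u) \<odot> inverse_of u"
  using assms by (intro inverse_of_eq inverse_pair_mult inverse_pair_star inverse_pair_inverse_of)

end

interpretation A: alternative_ring "(*) :: 'a::alt_star_algebra \<Rightarrow> 'a \<Rightarrow> 'a" 1
proof
  fix a b c :: 'a
  show "a * (b + c) = a * b + a * c" by (rule distrib_left)
  show "(a + b) * c = a * c + b * c" by (rule distrib_right)
  show "1 * a = a" by (rule one_mult)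
  show "a * 1 = a" by (rule mult_one)
  show "a * a * b = a * (a * b)" by (rule left_alternative)
  show "b * a * a = b * (a * a)" by (rule right_alternative)
  show "a + a = 0 \<Longrightarrow> a = 0" by (metis scaleR_2 scaleR_eq_0_iff zero_neq_numeral)
qed

lemma invol_zero [simp]: "invol (0::'a::alt_star_algebra) = 0"
  using invol_scaleR[of 0 "0::'a"] by simp

lemma invol_minus [simp]: "invol (- a) = - invol (a::'a::alt_star_algebra)"
  using invol_scaleR[of "-1" a] by simp

lemma invol_diff: "invol (a - b) = invol a - invol (b::'a::alt_star_algebra)"
  using invol_add[of a "- b"] by simp

interpretation AC: alternative_star_ring "cmult :: 'a::alt_star_algebra \<times> 'a \<Rightarrow> _" "(1, 0)" cinvol
proof
  fix a b c :: "'a \<times> 'a"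
  show "cmult a (b + c) = cmult a b + cmult a c"
    by (simp add: cmult_def A.ring_distribs algebra_simps)
  show "cmult (a + b) c = cmult a c + cmult b c"
    by (simp add: cmult_def A.ring_distribs algebra_simps)
  show "cmult (1, 0) a = a"
    by (simp add: cmult_def A.unit_left A.unit_right)
  show "cmult a (1, 0) = a"
    by (simp add: cmult_def A.unit_left A.unit_right)
  show "cmult (cmult a a) b = cmult a (cmult a b)"
    by (simp add: cmult_def A.ring_distribs left_alternative
        A.left_alternative_linear[of "snd a" "fst a"] algebra_simps)
  show "cmult (cmult b a) a = cmult b (cmult a a)"
    by (simp add: cmult_def A.ring_distribs right_alternative
        A.right_alternative_linear[of _ "snd a" "fst a"] algebra_simps)
  show "a + a = 0 \<Longrightarrow> a = 0"
    by (cases a) (auto simp: zero_prod_def intro: A.no_2_torsion)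
  show "cinvol (cmult a b) = cmult (cinvol b) (cinvol a)"
    by (simp add: cmult_def cinvol_def invol_diff invol_add invol_mult add.commute)
  show "cinvol (cinvol a) = a"
    by (simp add: cinvol_def invol_invol)
  show "cinvol (1, 0) = ((1, 0) :: 'a \<times> 'a)"
    by (simp add: cinvol_def invol_one)
qed

lemma sphere_invol: "J \<in> sphere_A \<Longrightarrow> invol J = - (J::'a::alt_star_algebra)"
  by (simp add: sphere_A_def trace_A_def eq_neg_iff_add_eq_0 add.commute)

lemma sphere_square:
  assumes "J \<in> sphere_A"
  shows "J * J = - (1::'a::alt_star_algebra)"
proof -
  have "J * invol J = 1"
    using assms by (simp add: sphere_A_def norm_A_def)
  then show ?thesis
    using sphere_invol[OF assms] by (simp add: A.mult_minus_right minus_equation_iff)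
qed

lemma sphere_uminus:
  assumes "J \<in> sphere_A"
  shows "- J \<in> sphere_A"
proof -
  have "invol (- J) = J" and "(- J) * J = (1::'a::alt_star_algebra)"
    using sphere_invol[OF assms] sphere_square[OF assms] by (simp_all add: A.mult_minus_left)
  then show ?thesis
    by (simp add: sphere_A_def trace_A_def norm_A_def)
qed

lemma scaleR_one_cancel: "a *\<^sub>R (1::'a::alt_star_algebra) = b *\<^sub>R 1 \<Longrightarrow> a = b"
  by (simp add: scaleR_cancel_right one_neq_zero)

text \<open>The involution fixes the real part and negates the imaginary part, which
  separates the two.\<close>

lemma sphere_combination_eq:
  assumes J: "J \<in> sphere_A" and K: "K \<in> sphere_A"
    and eq: "a *\<^sub>R 1 + b *\<^sub>R J = c *\<^sub>R 1 + d *\<^sub>R (K::'a::alt_star_algebra)"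
  shows "a = c" and "b *\<^sub>R J = d *\<^sub>R K" and "b * b = d * d"
proof -
  have "a *\<^sub>R 1 - b *\<^sub>R J = c *\<^sub>R 1 - d *\<^sub>R K"
    using arg_cong[OF eq, of invol]
    by (simp add: invol_add invol_scaleR invol_one sphere_invol[OF J] sphere_invol[OF K])
  with eq have "(a *\<^sub>R 1 + b *\<^sub>R J) + (a *\<^sub>R 1 - b *\<^sub>R J) = (c *\<^sub>R 1 + d *\<^sub>R K) + (c *\<^sub>R 1 - d *\<^sub>R K)"
    by simp
  then have "(a *\<^sub>R 1 - c *\<^sub>R 1) + (a *\<^sub>R 1 - c *\<^sub>R 1) = (0::'a)"
    by (simp add: algebra_simps)
  then have "a *\<^sub>R 1 - c *\<^sub>R 1 = (0::'a)"
    by (rule A.no_2_torsion)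
  then show ac: "a = c"
    using scaleR_one_cancel by simp
  then show bd: "b *\<^sub>R J = d *\<^sub>R K"
    using eq by simp
  have "(b *\<^sub>R J) * (b *\<^sub>R J) = (d *\<^sub>R K) * (d *\<^sub>R K)"
    using bd by simp
  then have "(- (b * b)) *\<^sub>R (1::'a) = (- (d * d)) *\<^sub>R 1"
    by (simp add: scaleR_mult_left scaleR_mult_right sphere_square[OF J] sphere_square[OF K])
  then show "b * b = d * d"
    using scaleR_one_cancel by fastforce
qed

lemma stem_real_point:
  assumes "is_stem D F" and "z \<in> D" and "Im z = 0"
  shows "snd (F z) = 0"
proof -
  have "cnj z = z"
    using assms(3) by (simp add: complex_eq_iff)
  then have "F z = cconj (F z)"
    using assms(1,2) unfolding is_stem_def by metis
  then have "snd (F z) + snd (F z) = 0"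
    by (simp add: cconj_def prod_eq_iff eq_neg_iff_add_eq_0[symmetric])
  then show ?thesis
    by (rule A.no_2_torsion)
qed

text \<open>A point of \<open>circ D\<close> has exactly the two representations \<open>\<alpha> + \<beta> J = \<alpha> + (-\<beta>)(-J)\<close>
  (or any \<open>J\<close> when \<open>\<beta> = 0\<close>); the stem condition makes the induced value agree on them.\<close>

lemma stem_value_well_defined:
  assumes F: "is_stem D F" and z: "z \<in> D" and w: "w \<in> D"
    and J: "J \<in> sphere_A" and K: "K \<in> sphere_A"
    and eq: "Re z *\<^sub>R 1 + Im z *\<^sub>R J = Re w *\<^sub>R 1 + Im w *\<^sub>R (K::'a::alt_star_algebra)"
  shows "fst (F z) + J * snd (F z) = fst (F w) + K * snd (F w)"
proof -
  have re: "Re z = Re w" and im: "Im z *\<^sub>R J = Im w *\<^sub>R K" and sq: "Im z * Im z = Im w * Im w"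
    using sphere_combination_eq[OF J K eq] by auto
  have "Im w = Im z \<or> Im w = - Im z"
    using sq by (simp add: square_eq_iff eq_commute)
  then consider "Im z = 0" | "Im z \<noteq> 0" "Im w = Im z" | "Im z \<noteq> 0" "Im w = - Im z"
    by blast
  then show ?thesis
  proof cases
    case 1
    then have "z = w"
      using re sq by (simp add: complex_eq_iff)
    with 1 show ?thesis
      using stem_real_point[OF F z] by simp
  next
    case 2
    then have "Im z *\<^sub>R J = Im z *\<^sub>R K"
      using im by simp
    then have "J = K"
      using 2 by simp
    moreover have "z = w"
      using re 2 by (simp add: complex_eq_iff)
    ultimately show ?thesis
      by simp
  next
    case 3
    then have "Im z *\<^sub>R K = Im z *\<^sub>R (- J)"
      using im by simp
    then have "K = - J \<or> Im z = 0"
      by (simp only: scaleR_cancel_left)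
    with 3 have "K = - J"
      by simp
    moreover have "w = cnj z"
      using re 3 by (simp add: complex_eq_iff)
    ultimately show ?thesis
      using F z by (simp add: is_stem_def cconj_def A.mult_minus_left A.mult_minus_right)
  qed
qed

lemma induces_exists:
  assumes F: "is_stem D F"
  shows "\<exists>f::'a::alt_star_algebra \<Rightarrow> 'a. induces D F f"
proof -
  let ?value = "\<lambda>x y. \<exists>z J. z \<in> D \<and> J \<in> sphere_A \<and> x = Re z *\<^sub>R 1 + Im z *\<^sub>R J
    \<and> y = fst (F z) + J * snd (F z)"
  define f where "f x = (if x \<in> circ D then Eps (?value x) else 0)" for x :: 'a
  have "f (Re z *\<^sub>R 1 + Im z *\<^sub>R J) = fst (F z) + J * snd (F z)"
    if z: "z \<in> D" and J: "J \<in> sphere_A" for z J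
  proof -
    let ?x = "Re z *\<^sub>R 1 + Im z *\<^sub>R J"
    have "?value ?x (fst (F z) + J * snd (F z))"
      using z J by blast
    then have "?value ?x (Eps (?value ?x))"
      by (rule someI)
    then obtain w K where "w \<in> D" "K \<in> sphere_A" "?x = Re w *\<^sub>R 1 + Im w *\<^sub>R K"
      and "Eps (?value ?x) = fst (F w) + K * snd (F w)"
      by blast
    then have "Eps (?value ?x) = fst (F z) + J * snd (F z)"
      using stem_value_well_defined[OF F z _ J] by simp
    moreover have "?x \<in> circ D"
      using z J by (auto simp: circ_def)
    ultimately show ?thesis
      by (simp add: f_def)
  qed
  then have "induces D F f"
    by (simp add: induces_def f_def)
  then show ?thesis
    by blast
qed

lemma induces_unique:
  assumes "induces D F f" and "induces D F g"
  shows "f = g"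
proof
  fix x
  show "f x = g x"
  proof (cases "x \<in> circ D")
    case True
    then obtain z J where "z \<in> D" "J \<in> sphere_A" "x = Re z *\<^sub>R 1 + Im z *\<^sub>R J"
      by (auto simp: circ_def)
    then show ?thesis
      using assms by (simp add: induces_def)
  next
    case False
    then show ?thesis
      using assms by (simp add: induces_def)
  qed
qed

lemma induces_value:
  "induces D F f \<Longrightarrow> z \<in> D \<Longrightarrow> J \<in> sphere_A \<Longrightarrow>
    f (Re z *\<^sub>R 1 + Im z *\<^sub>R J) = fst (F z) + J * snd (F z)"
  by (simp add: induces_def)

lemma induces_induced:
  assumes "is_stem D F"
  shows "induces D F (induced D F)"
proof -
  have "\<exists>!f. induces D F f"
    using induces_exists[OF assms] induces_unique by blast
  then show ?thesis
    unfolding induced_def by (rule theI')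
qed

text \<open>Evaluating at \<open>\<alpha> \<pm> \<beta> J\<close> for a single imaginary unit \<open>J\<close> recovers both components
  of the stem; this is where a nonempty sphere is needed.\<close>

lemma stem_unique:
  assumes S: "(sphere_A :: 'a::alt_star_algebra set) \<noteq> {}"
    and F: "is_stem D F" and G: "is_stem D G"
    and f: "induces D F (f::'a \<Rightarrow> 'a)" and g: "induces D G f"
  shows "F = G"
proof
  fix z
  show "F z = G z"
  proof (cases "z \<in> D")
    case False
    then show ?thesis
      using F G by (simp add: is_stem_def)
  next
    case z: True
    obtain J :: 'a where J: "J \<in> sphere_A"
      using S by blast
    have plus: "fst (F z) + J * snd (F z) = fst (G z) + J * snd (G z)"
      using induces_value[OF f z J] induces_value[OF g z J] by simp
    have "fst (F z) + (- J) * snd (F z) = fst (G z) + (- J) * snd (G z)"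
      using induces_value[OF f z sphere_uminus[OF J]] induces_value[OF g z sphere_uminus[OF J]]
      by simp
    then have minus: "fst (F z) - J * snd (F z) = fst (G z) - J * snd (G z)"
      by (simp add: A.mult_minus_left)
    have "(fst (F z) - fst (G z)) + (fst (F z) - fst (G z)) = 0"
      using arg_cong2[OF plus minus, of "(+)"] by (simp add: algebra_simps)
    then have "fst (F z) - fst (G z) = 0"
      by (rule A.no_2_torsion)
    then have fst_eq: "fst (F z) = fst (G z)"
      by simp
    then have "J * (J * snd (F z)) = J * (J * snd (G z))"
      using plus by simp
    then have "snd (F z) = snd (G z)"
      by (simp add: left_alternative[symmetric] sphere_square[OF J] A.mult_minus_left A.unit_left)
    with fst_eq show ?thesis
      by (simp add: prod_eq_iff)
  qed
qed

lemma cconj_cmult: "cmult (cconj a) (cconj b) = cconj (cmult a (b::'a::alt_star_algebra \<times> 'a))"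
  by (simp add: cmult_def cconj_def A.mult_minus_left A.mult_minus_right)

lemma cinvol_cconj: "cinvol (cconj a) = cconj (cinvol (a::'a::alt_star_algebra \<times> 'a))"
  by (simp add: cinvol_def cconj_def)

lemma AC_inverse_pair_cconj:
  "AC.inverse_pair u v \<Longrightarrow> AC.inverse_pair (cconj u) (cconj (v::'a::alt_star_algebra \<times> 'a))"
  unfolding AC.inverse_pair_def by (simp add: cconj_cmult) (simp add: cconj_def)

lemma is_stem_cmult:
  "is_stem D F \<Longrightarrow> is_stem D G \<Longrightarrow> is_stem D (\<lambda>z. cmult (F z) (G z :: 'a::alt_star_algebra \<times> 'a))"
  by (simp add: is_stem_def cconj_cmult) (simp add: cmult_def)

lemma is_stem_cinvol: "is_stem D F \<Longrightarrow> is_stem D (\<lambda>z. cinvol (F z :: 'a::alt_star_algebra \<times> 'a))"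
  by (simp add: is_stem_def cinvol_cconj) (simp add: cinvol_def)

definition stem_one :: "complex set \<Rightarrow> complex \<Rightarrow> 'a::alt_star_algebra \<times> 'a" where
  "stem_one D z = (if z \<in> D then (1, 0) else (0, 0))"

definition stem_inverse ::
    "complex set \<Rightarrow> (complex \<Rightarrow> 'a::alt_star_algebra \<times> 'a) \<Rightarrow> complex \<Rightarrow> 'a \<times> 'a" where
  "stem_inverse D F z = (if z \<in> D then AC.inverse_of (F z) else (0, 0))"

lemma is_stem_one: "\<forall>z\<in>D. cnj z \<in> D \<Longrightarrow> is_stem D (stem_one D)"
  by (simp add: is_stem_def stem_one_def cconj_def)

lemma is_stem_inverse:
  assumes cc: "\<forall>z\<in>D. cnj z \<in> D" and F: "is_stem D F"
    and inv: "\<forall>z\<in>D. AC.invertible (F z :: 'a::alt_star_algebra \<times> 'a)"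
  shows "is_stem D (stem_inverse D F)"
  unfolding is_stem_def
proof (intro conjI ballI allI impI)
  fix z
  assume z: "z \<in> D"
  have "AC.inverse_of (cconj (F z)) = cconj (AC.inverse_of (F z))"
    using AC_inverse_pair_cconj[OF AC.inverse_pair_inverse_of] AC.inverse_of_eq inv z by blast
  then show "stem_inverse D F (cnj z) = cconj (stem_inverse D F z)"
    using F cc z by (simp add: is_stem_def stem_inverse_def)
next
  fix z
  assume "z \<notin> D"
  then show "stem_inverse D F z = (0, 0)"
    by (simp add: stem_inverse_def)
qed

context
  fixes D :: "complex set"
  assumes sphere_nonempty: "(sphere_A :: 'a::alt_star_algebra set) \<noteq> {}"
begin

lemma stem_of_slice_fun:
  assumes "slice_fun D (f :: 'a \<Rightarrow> 'a)"
  shows "is_stem D (stem_of D f)" and "induces D (stem_of D f) f"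
proof -
  have "\<exists>!F. is_stem D F \<and> induces D F f"
    using assms stem_unique[OF sphere_nonempty] unfolding slice_fun_def by blast
  then have "is_stem D (stem_of D f) \<and> induces D (stem_of D f) f"
    unfolding stem_of_def by (rule theI')
  then show "is_stem D (stem_of D f)" and "induces D (stem_of D f) f"
    by auto
qed

lemma stem_of_induced:
  assumes F: "is_stem D (F :: complex \<Rightarrow> 'a \<times> 'a)"
  shows "slice_fun D (induced D F)" and "stem_of D (induced D F) = F"
proof -
  show f: "slice_fun D (induced D F)"
    using F induces_induced[OF F] by (auto simp: slice_fun_def)
  show "stem_of D (induced D F) = F"
    using stem_unique[OF sphere_nonempty stem_of_slice_fun(1)[OF f] F
        stem_of_slice_fun(2)[OF f] induces_induced[OF F]] .
qed

lemma slice_fun_eq_iff: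
  assumes f: "slice_fun D (f :: 'a \<Rightarrow> 'a)" and g: "slice_fun D g"
  shows "f = g \<longleftrightarrow> (\<forall>z\<in>D. stem_of D f z = stem_of D g z)"
proof
  assume eq: "\<forall>z\<in>D. stem_of D f z = stem_of D g z"
  have "stem_of D f = stem_of D g"
  proof
    fix z
    show "stem_of D f z = stem_of D g z"
      using eq stem_of_slice_fun(1)[OF f] stem_of_slice_fun(1)[OF g]
      by (cases "z \<in> D") (auto simp: is_stem_def)
  qed
  then show "f = g"
    using induces_unique stem_of_slice_fun(2)[OF f] stem_of_slice_fun(2)[OF g] by metis
qed simp

lemma
  assumes "slice_fun D (f :: 'a \<Rightarrow> 'a)" and "slice_fun D g"
  shows slice_fun_slice_mult: "slice_fun D (slice_mult D f g)"
    and stem_of_slice_mult: "stem_of D (slice_mult D f g) z = cmult (stem_of D f z) (stem_of D g z)"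
  using stem_of_induced[OF is_stem_cmult[OF assms[THEN stem_of_slice_fun(1)]]]
  unfolding slice_mult_def by auto

lemma
  assumes "slice_fun D (f :: 'a \<Rightarrow> 'a)"
  shows slice_fun_slice_cnj: "slice_fun D (slice_cnj D f)"
    and stem_of_slice_cnj: "stem_of D (slice_cnj D f) z = cinvol (stem_of D f z)"
  using stem_of_induced[OF is_stem_cinvol[OF assms[THEN stem_of_slice_fun(1)]]]
  unfolding slice_cnj_def by auto

lemma
  assumes "slice_fun D (f :: 'a \<Rightarrow> 'a)"
  shows slice_fun_slice_N: "slice_fun D (slice_N D f)"
    and stem_of_slice_N: "stem_of D (slice_N D f) z = cmult (stem_of D f z) (cinvol (stem_of D f z))"
  using assms unfolding slice_N_def
  by (simp_all add: slice_fun_slice_mult stem_of_slice_mult slice_fun_slice_cnj stem_of_slice_cnj)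

lemma slice_N_slice_cnj:
  assumes "slice_fun D (f :: 'a \<Rightarrow> 'a)"
  shows "slice_N D (slice_cnj D f) = slice_mult D (slice_cnj D f) f"
  using assms
  by (simp add: slice_fun_eq_iff slice_fun_slice_N slice_fun_slice_mult slice_fun_slice_cnj
      stem_of_slice_N stem_of_slice_mult stem_of_slice_cnj)

context
  assumes cnj_closed: "\<forall>z\<in>D. cnj z \<in> D"
begin

lemma
  shows slice_fun_slice_one: "slice_fun D (slice_one D :: 'a \<Rightarrow> 'a)"
    and stem_of_slice_one: "stem_of D (slice_one D :: 'a \<Rightarrow> 'a) = stem_one D"
proof -
  have "induces D (stem_one D) (slice_one D :: 'a \<Rightarrow> 'a)"
    by (auto simp: induces_def stem_one_def slice_one_def circ_def)
  then have "slice_one D = (induced D (stem_one D) :: 'a \<Rightarrow> 'a)"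
    using induces_induced[OF is_stem_one[OF cnj_closed]] induces_unique by blast
  then show "slice_fun D (slice_one D :: 'a \<Rightarrow> 'a)" and "stem_of D (slice_one D :: 'a \<Rightarrow> 'a) = stem_one D"
    using stem_of_induced[OF is_stem_one[OF cnj_closed]] by auto
qed

lemma slice_inverse_pair_iff:
  assumes f: "slice_fun D (f :: 'a \<Rightarrow> 'a)" and g: "slice_fun D g"
  shows "slice_mult D f g = slice_one D \<and> slice_mult D g f = slice_one D
    \<longleftrightarrow> (\<forall>z\<in>D. AC.inverse_pair (stem_of D f z) (stem_of D g z))"
  using f g
  by (auto simp: slice_fun_eq_iff slice_fun_slice_mult slice_fun_slice_one stem_of_slice_mult
      stem_of_slice_one stem_one_def AC.inverse_pair_def)

lemma slice_inv_eq:
  assumes f: "slice_fun D (f :: 'a \<Rightarrow> 'a)" and g: "slice_fun D g"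
    and fg: "slice_mult D f g = slice_one D" and gf: "slice_mult D g f = slice_one D"
  shows "slice_inv D f = g"
  unfolding slice_inv_def
proof (rule the_equality)
  fix h
  assume "slice_fun D h \<and> slice_mult D f h = slice_one D \<and> slice_mult D h f = slice_one D"
  then have h: "slice_fun D h" and "\<forall>z\<in>D. AC.inverse_pair (stem_of D f z) (stem_of D h z)"
    using f slice_inverse_pair_iff by auto
  moreover have "\<forall>z\<in>D. AC.inverse_pair (stem_of D f z) (stem_of D g z)"
    using f g fg gf slice_inverse_pair_iff by blast
  ultimately show "h = g"
    unfolding slice_fun_eq_iff[OF h g] by (blast intro: AC.inverse_pair_unique)
qed (use g fg gf in blast)

lemma slice_invertible_iff:
  assumes f: "slice_fun D (f :: 'a \<Rightarrow> 'a)"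
  shows "slice_invertible D f \<longleftrightarrow> (\<forall>z\<in>D. AC.invertible (stem_of D f z))"
proof
  assume "slice_invertible D f"
  then obtain g where "slice_fun D g" and "\<forall>z\<in>D. AC.inverse_pair (stem_of D f z) (stem_of D g z)"
    using f slice_inverse_pair_iff unfolding slice_invertible_def by blast
  then show "\<forall>z\<in>D. AC.invertible (stem_of D f z)"
    unfolding AC.invertible_def by blast
next
  assume inv: "\<forall>z\<in>D. AC.invertible (stem_of D f z)"
  define G where "G = stem_inverse D (stem_of D f)"
  have G: "is_stem D G"
    unfolding G_def using is_stem_inverse[OF cnj_closed stem_of_slice_fun(1)[OF f] inv] .
  have "\<forall>z\<in>D. AC.inverse_pair (stem_of D f z) (stem_of D (induced D G) z)"
    unfolding stem_of_induced(2)[OF G] unfolding G_def stem_inverse_def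
    using inv by (simp add: AC.inverse_pair_inverse_of)
  then show "slice_invertible D f"
    using slice_inverse_pair_iff[OF f stem_of_induced(1)[OF G]] stem_of_induced(1)[OF G]
    unfolding slice_invertible_def by blast
qed

lemma
  assumes f: "slice_fun D (f :: 'a \<Rightarrow> 'a)" and inv: "slice_invertible D f"
  shows slice_fun_slice_inv: "slice_fun D (slice_inv D f)"
    and stem_of_slice_inv: "z \<in> D \<Longrightarrow> stem_of D (slice_inv D f) z = AC.inverse_of (stem_of D f z)"
proof -
  obtain g where g: "slice_fun D g"
    and fg: "slice_mult D f g = slice_one D" and gf: "slice_mult D g f = slice_one D"
    using inv by (auto simp: slice_invertible_def)
  have g_eq: "slice_inv D f = g"
    using slice_inv_eq[OF f g fg gf] .
  show "slice_fun D (slice_inv D f)"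
    using g g_eq by simp
  show "stem_of D (slice_inv D f) z = AC.inverse_of (stem_of D f z)" if "z \<in> D"
    using that slice_inverse_pair_iff[OF f g] fg gf g_eq AC.inverse_of_eq by metis
qed

lemma slice_invertible_slice_cnj_iff:
  assumes "slice_fun D (f :: 'a \<Rightarrow> 'a)"
  shows "slice_invertible D (slice_cnj D f) \<longleftrightarrow> slice_invertible D f"
  using assms
  by (simp add: slice_invertible_iff slice_fun_slice_cnj stem_of_slice_cnj AC.invertible_star_iff)

lemma slice_inv_slice_cnj:
  assumes f: "slice_fun D (f :: 'a \<Rightarrow> 'a)" and inv: "slice_invertible D f"
  shows "slice_inv D (slice_cnj D f) = slice_cnj D (slice_inv D f)"
proof -
  have "\<forall>z\<in>D. AC.invertible (stem_of D f z)"
    using f inv slice_invertible_iff by blast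
  moreover have "slice_invertible D (slice_cnj D f)"
    using f inv slice_invertible_slice_cnj_iff by blast
  ultimately show ?thesis
    using f inv
    by (simp add: slice_fun_eq_iff slice_fun_slice_inv slice_fun_slice_cnj stem_of_slice_inv
        stem_of_slice_cnj AC.inverse_of_star)
qed

lemma slice_invertible_iff_slice_N:
  assumes f: "slice_fun D (f :: 'a \<Rightarrow> 'a)"
  shows "slice_invertible D f
    \<longleftrightarrow> slice_invertible D (slice_N D f) \<and> slice_invertible D (slice_N D (slice_cnj D f))"
proof -
  have "slice_invertible D f \<longleftrightarrow> (\<forall>z\<in>D. AC.invertible (stem_of D f z))"
    using f by (rule slice_invertible_iff)
  also have "\<dots> \<longleftrightarrow> (\<forall>z\<in>D. AC.invertible (cmult (stem_of D f z) (cinvol (stem_of D f z)))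
      \<and> AC.invertible (cmult (cinvol (stem_of D f z)) (stem_of D f z)))"
    by (intro ball_cong refl) (rule AC.invertible_iff_norms)
  also have "\<dots> \<longleftrightarrow> slice_invertible D (slice_N D f) \<and> slice_invertible D (slice_N D (slice_cnj D f))"
    using f by (simp add: slice_invertible_iff slice_fun_slice_N slice_fun_slice_cnj stem_of_slice_N
        stem_of_slice_cnj ball_conj_distrib)
  finally show ?thesis .
qed

lemma slice_inv_via_slice_N:
  assumes f: "slice_fun D (f :: 'a \<Rightarrow> 'a)" and inv: "slice_invertible D f"
  shows "slice_inv D f = slice_mult D (slice_cnj D f) (slice_inv D (slice_N D f))"
    and "slice_inv D f = slice_mult D (slice_inv D (slice_N D (slice_cnj D f))) (slice_cnj D f)"
proof -
  have u: "\<forall>z\<in>D. AC.invertible (stem_of D f z)"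
    using f inv slice_invertible_iff by blast
  have N: "slice_invertible D (slice_N D f)" "slice_invertible D (slice_N D (slice_cnj D f))"
    using f inv slice_invertible_iff_slice_N by blast+
  note stems = slice_fun_slice_inv stem_of_slice_inv slice_fun_slice_cnj stem_of_slice_cnj
    slice_fun_slice_N stem_of_slice_N slice_fun_slice_mult stem_of_slice_mult
  show "slice_inv D f = slice_mult D (slice_cnj D f) (slice_inv D (slice_N D f))"
    using f inv N u by (simp add: slice_fun_eq_iff stems AC.inverse_of_via_norms(1))
  show "slice_inv D f = slice_mult D (slice_inv D (slice_N D (slice_cnj D f))) (slice_cnj D f)"
    using f inv N u by (simp add: slice_fun_eq_iff stems AC.inverse_of_via_norms(2))
qed

lemma slice_inv_slice_N:
  assumes f: "slice_fun D (f :: 'a \<Rightarrow> 'a)" and inv: "slice_invertible D f"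
  shows "slice_inv D (slice_N D f) = slice_mult D (slice_cnj D (slice_inv D f)) (slice_inv D f)"
proof -
  have u: "\<forall>z\<in>D. AC.invertible (stem_of D f z)"
    using f inv slice_invertible_iff by blast
  have N: "slice_invertible D (slice_N D f)"
    using f inv slice_invertible_iff_slice_N by blast
  show ?thesis
    using f inv N u
    by (simp add: slice_fun_eq_iff slice_fun_slice_inv stem_of_slice_inv slice_fun_slice_cnj
        stem_of_slice_cnj slice_fun_slice_N stem_of_slice_N slice_fun_slice_mult stem_of_slice_mult
        AC.inverse_of_norm)
qed

end

end

theorem theorem2p1:
  fixes D :: "complex set" and f :: "'a::alt_star_algebra \<Rightarrow> 'a"
  assumes "D \<noteq> {}"
    and "\<forall>z\<in>D. cnj z \<in> D"
    and "(sphere_A :: 'a set) \<noteq> {}"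
    and "slice_fun D f"
  shows "(slice_invertible D f \<longleftrightarrow> slice_invertible D (slice_cnj D f))
    \<and> (slice_invertible D f \<longrightarrow>
         slice_inv D (slice_cnj D f) = slice_cnj D (slice_inv D f))
    \<and> (slice_invertible D f \<longleftrightarrow>
         slice_invertible D (slice_N D f) \<and> slice_invertible D (slice_N D (slice_cnj D f)))
    \<and> (slice_invertible D f \<longrightarrow>
         slice_inv D f = slice_mult D (slice_cnj D f) (slice_inv D (slice_N D f))
         \<and> slice_inv D f = slice_mult D (slice_inv D (slice_N D (slice_cnj D f))) (slice_cnj D f))
    \<and> (slice_invertible D f \<longrightarrow>
         slice_inv D (slice_N D f) = slice_mult D (slice_cnj D (slice_inv D f)) (slice_inv D f)
         \<and> slice_inv D (slice_N D f) = slice_N D (slice_cnj D (slice_inv D f)))"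
proof -
  note S = assms(3) and cc = assms(2) and f = assms(4)
  have "slice_inv D (slice_N D f) = slice_N D (slice_cnj D (slice_inv D f))"
    if "slice_invertible D f"
    using slice_inv_slice_N[OF S cc f that] slice_N_slice_cnj[OF S slice_fun_slice_inv[OF S cc f that]]
    by simp
  then show ?thesis
    using slice_invertible_slice_cnj_iff[OF S cc f] slice_inv_slice_cnj[OF S cc f]
      slice_invertible_iff_slice_N[OF S cc f] slice_inv_via_slice_N[OF S cc f]
      slice_inv_slice_N[OF S cc f]
    by blast
qed

end
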